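(* Let $\widehat z_2(s,t)$ be a complex-valued function of class $\mathcal{C}^7$ on $[0,\epsilon]\times I$, where $I$ is a neighborhood of $[0,2\pi]$, such that $\widehat z_2(s,t)=e^{it}-\tfrac43 a s^4e^{3it}+O(s^5)$ with $a\in\mathbb{R}$, $\operatorname{Im}\widehat z_2(s,0)=0$ for all $s\in[0,\epsilon]$, and for each $s\in(0,\epsilon]$ the map $t\mapsto\widehat z_2(s,t)$ is periodic with period $T_s$ and parametrizes a simple closed curve on $[0,T_s]$ (with $T_0=2\pi$). Then, after possibly shrinking $\epsilon$, the function $[0,\epsilon]\ni s\mapsto T_s\in\mathbb{R}$ is of class $\mathcal{C}^7$ and $T_s=2\pi+O(s^5)$.
   Context: In the paper, $\widehat z_2(s,t)=z_2(s,t)/s$, where $z_2(s,t)$ is the $z_2$-component of the family of chains (solutions of the Fefferman Hamiltonian system) of the hypersurface $M$ with the specified initial conditions; the expansion hypothesis corresponds to $z_2(s,t)=se^{it}-\tfrac43 a s^5e^{3it}+O(s^6)$. *)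

theory Defs
  imports "HOL-Analysis.Analysis"
begin

text \<open>Functions of class C^k on a set S (derivatives taken within S, so one-sided
  derivatives at boundary points of closed sets are used).\<close>

primrec Ck_on :: "nat \<Rightarrow> 'a::euclidean_space set \<Rightarrow> ('a \<Rightarrow> 'b::real_normed_vector) \<Rightarrow> bool" where
  "Ck_on 0 S f \<longleftrightarrow> continuous_on S f"
| "Ck_on (Suc k) S f \<longleftrightarrow>
     (\<exists>D :: 'a \<Rightarrow> 'a \<Rightarrow> 'b.
        (\<forall>x\<in>S. (f has_derivative (\<lambda>h. \<Sum>i\<in>Basis. (h \<bullet> i) *\<^sub>R D i x)) (at x within S))
        \<and> (\<forall>i\<in>Basis. Ck_on k S (D i)))"

end

theory Submission
  imports Defs "HOL-Complex_Analysis.Winding_Numbers"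
begin

text \<open>For small \<open>s\<close> the curve \<open>t \<mapsto> zh (s, t)\<close> is uniformly \<open>O(s)\<close>-close to the unit
  circle. Since \<open>zh (s, T s) = zh (s, 0)\<close>, the period \<open>T s\<close> is then close to a multiple
  \<open>2 \<pi> n\<close>; \<open>n = 0\<close> is impossible because shifting \<open>\<pi>\<close> back by periods would bring
  \<open>zh (s, \<pi>) \<approx> -1\<close> next to \<open>zh (s, 0) \<approx> 1\<close>, and \<open>n \<le> 1\<close> because the curve is homotopic
  in \<open>\<complex> - {0}\<close> to the circle run \<open>n\<close> times while a simple closed curve winds at most once.
  So \<open>(s, T s)\<close> stays in a box around \<open>(0, 2 \<pi>)\<close> where \<open>\<partial>\<^sub>t Im zh \<ge> 1/2\<close> (it is
  \<open>cos t\<close> at \<open>s = 0\<close>), and \<open>Im zh (s, T s) = Im zh (s, 0) = 0\<close>. Thus \<open>T\<close> is the implicit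
  function of \<open>Im zh = 0\<close> in that box: the mean value theorem gives
  \<open>T' = - \<partial>\<^sub>s Im zh / \<partial>\<^sub>t Im zh\<close> along the graph, which bootstraps to \<open>C\<^sup>7\<close>, and
  \<open>\<bar>T s - 2 \<pi>\<bar> \<le> 2 \<bar>Im zh (s, 2 \<pi>)\<bar> = O(s\<^sup>5)\<close> since the \<open>s\<^sup>4\<close> term of the
  expansion is real at \<open>t = 2 \<pi>\<close>.\<close>

section \<open>Functions of class \<open>C\<^sup>k\<close>\<close>

declare Ck_on.simps(2)[simp del]

lemma Ck_on_SucI:
  assumes "\<forall>x\<in>S. (f has_derivative (\<lambda>h. \<Sum>i\<in>Basis. (h \<bullet> i) *\<^sub>R D i x)) (at x within S)"
    and "\<forall>i\<in>Basis. Ck_on k S (D i)"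
  shows "Ck_on (Suc k) S f"
  unfolding Ck_on.simps(2) using assms by blast

lemma Ck_on_SucE:
  assumes "Ck_on (Suc k) S f"
  obtains D where "\<forall>x\<in>S. (f has_derivative (\<lambda>h. \<Sum>i\<in>Basis. (h \<bullet> i) *\<^sub>R D i x)) (at x within S)"
    and "\<forall>i\<in>Basis. Ck_on k S (D i)"
  using assms unfolding Ck_on.simps(2) by blast

lemma Ck_on_Suc_imp_Ck_on: "Ck_on (Suc k) S f \<Longrightarrow> Ck_on k S f"
proof (induction k arbitrary: f)
  case 0
  then obtain D where "\<forall>x\<in>S. (f has_derivative (\<lambda>h. \<Sum>i\<in>Basis. (h \<bullet> i) *\<^sub>R D i x)) (at x within S)"
    by (rule Ck_on_SucE)
  then show ?case
    by (auto simp: continuous_on_eq_continuous_within intro: has_derivative_continuous)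
next
  case (Suc k)
  obtain D where "\<forall>x\<in>S. (f has_derivative (\<lambda>h. \<Sum>i\<in>Basis. (h \<bullet> i) *\<^sub>R D i x)) (at x within S)"
    and "\<forall>i\<in>Basis. Ck_on (Suc k) S (D i)"
    using Suc.prems by (rule Ck_on_SucE)
  then show ?case using Suc.IH by (intro Ck_on_SucI[of S f D]) auto
qed

lemma Ck_on_le: "k \<le> m \<Longrightarrow> Ck_on m S f \<Longrightarrow> Ck_on k S f"
  by (induction m rule: dec_induct) (use Ck_on_Suc_imp_Ck_on in blast)+

lemma Ck_on_imp_continuous_on: "Ck_on k S f \<Longrightarrow> continuous_on S f"
  using Ck_on_le[of 0 k] by auto

lemma Ck_on_subset: "Ck_on k S f \<Longrightarrow> T \<subseteq> S \<Longrightarrow> Ck_on k T f"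
proof (induction k arbitrary: f)
  case 0
  then show ?case by (auto intro: continuous_on_subset)
next
  case (Suc k)
  obtain D where "\<forall>x\<in>S. (f has_derivative (\<lambda>h. \<Sum>i\<in>Basis. (h \<bullet> i) *\<^sub>R D i x)) (at x within S)"
    and "\<forall>i\<in>Basis. Ck_on k S (D i)"
    using Suc.prems(1) by (rule Ck_on_SucE)
  then show ?case using Suc
    by (intro Ck_on_SucI[of T f D]) (auto intro: has_derivative_subset)
qed

lemma Ck_on_const: "Ck_on k S (\<lambda>x. c)"
proof (induction k arbitrary: c)
  case (Suc k)
  show ?case by (rule Ck_on_SucI[where D="\<lambda>i x. 0"]) (auto intro: Suc)
qed simp

lemma Ck_on_ident: "Ck_on k S (\<lambda>x. x)"
proof (cases k)
  case (Suc m)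
  show ?thesis unfolding Suc
    by (rule Ck_on_SucI[where D="\<lambda>i x. i"])
       (auto intro!: Ck_on_const has_derivative_eq_rhs[OF has_derivative_ident]
         simp: euclidean_representation)
qed (simp add: continuous_on_id)

lemma Ck_on_add: "Ck_on k S f \<Longrightarrow> Ck_on k S g \<Longrightarrow> Ck_on k S (\<lambda>x. f x + g x)"
proof (induction k arbitrary: f g)
  case 0
  then show ?case by (auto intro: continuous_on_add)
next
  case (Suc k)
  obtain D where D: "\<forall>x\<in>S. (f has_derivative (\<lambda>h. \<Sum>i\<in>Basis. (h \<bullet> i) *\<^sub>R D i x)) (at x within S)"
     "\<forall>i\<in>Basis. Ck_on k S (D i)" using Suc.prems(1) by (rule Ck_on_SucE)
  obtain E where E: "\<forall>x\<in>S. (g has_derivative (\<lambda>h. \<Sum>i\<in>Basis. (h \<bullet> i) *\<^sub>R E i x)) (at x within S)"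
     "\<forall>i\<in>Basis. Ck_on k S (E i)" using Suc.prems(2) by (rule Ck_on_SucE)
  show ?case
  proof (rule Ck_on_SucI[where D="\<lambda>i x. D i x + E i x"])
    show "\<forall>x\<in>S. ((\<lambda>x. f x + g x) has_derivative
        (\<lambda>h. \<Sum>i\<in>Basis. (h \<bullet> i) *\<^sub>R (D i x + E i x))) (at x within S)"
      using D(1) E(1) by (auto intro!: has_derivative_eq_rhs[OF has_derivative_add]
          simp: scaleR_right_distrib sum.distrib)
    show "\<forall>i\<in>Basis. Ck_on k S (\<lambda>x. D i x + E i x)" using D(2) E(2) Suc.IH by auto
  qed
qed

lemma Ck_on_sum:
  "finite A \<Longrightarrow> (\<And>j. j \<in> A \<Longrightarrow> Ck_on k S (f j)) \<Longrightarrow> Ck_on k S (\<lambda>x. \<Sum>j\<in>A. f j x)"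
  by (induction A rule: finite_induct) (auto intro: Ck_on_add Ck_on_const)

lemma Ck_on_bounded_linear:
  "bounded_linear L \<Longrightarrow> Ck_on k S f \<Longrightarrow> Ck_on k S (\<lambda>x. L (f x))"
proof (induction k arbitrary: f)
  case 0
  then show ?case by (auto intro: continuous_on_compose2[of UNIV L] linear_continuous_on)
next
  case (Suc k)
  obtain D where D: "\<forall>x\<in>S. (f has_derivative (\<lambda>h. \<Sum>i\<in>Basis. (h \<bullet> i) *\<^sub>R D i x)) (at x within S)"
     "\<forall>i\<in>Basis. Ck_on k S (D i)" using Suc.prems(2) by (rule Ck_on_SucE)
  have lin: "linear L" using Suc.prems(1) bounded_linear.linear by blast
  show ?case
  proof (rule Ck_on_SucI[where D="\<lambda>i x. L (D i x)"])
    show "\<forall>x\<in>S. ((\<lambda>x. L (f x)) has_derivative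
        (\<lambda>h. \<Sum>i\<in>Basis. (h \<bullet> i) *\<^sub>R L (D i x))) (at x within S)"
      using D(1) by (auto intro!: has_derivative_eq_rhs[OF bounded_linear.has_derivative[OF Suc.prems(1)]]
          simp: linear_sum[OF lin] linear_scale[OF lin])
    show "\<forall>i\<in>Basis. Ck_on k S (\<lambda>x. L (D i x))" using D(2) Suc by auto
  qed
qed

lemma Ck_on_scaleR:
  fixes f :: "'a::euclidean_space \<Rightarrow> real" and g :: "'a \<Rightarrow> 'b::real_normed_vector"
  shows "Ck_on k S f \<Longrightarrow> Ck_on k S g \<Longrightarrow> Ck_on k S (\<lambda>x. f x *\<^sub>R g x)"
proof (induction k arbitrary: f g)
  case 0
  then show ?case by (auto intro: continuous_on_scaleR)
next
  case (Suc k)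
  obtain D where D: "\<forall>x\<in>S. (f has_derivative (\<lambda>h. \<Sum>i\<in>Basis. (h \<bullet> i) *\<^sub>R D i x)) (at x within S)"
     "\<forall>i\<in>Basis. Ck_on k S (D i)" using Suc.prems(1) by (rule Ck_on_SucE)
  obtain E where E: "\<forall>x\<in>S. (g has_derivative (\<lambda>h. \<Sum>i\<in>Basis. (h \<bullet> i) *\<^sub>R E i x)) (at x within S)"
     "\<forall>i\<in>Basis. Ck_on k S (E i)" using Suc.prems(2) by (rule Ck_on_SucE)
  have "Ck_on k S f" "Ck_on k S g" using Suc.prems Ck_on_Suc_imp_Ck_on by blast+
  show ?case
  proof (rule Ck_on_SucI[where D="\<lambda>i x. f x *\<^sub>R E i x + D i x *\<^sub>R g x"])
    show "\<forall>x\<in>S. ((\<lambda>x. f x *\<^sub>R g x) has_derivative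
        (\<lambda>h. \<Sum>i\<in>Basis. (h \<bullet> i) *\<^sub>R (f x *\<^sub>R E i x + D i x *\<^sub>R g x))) (at x within S)"
      using D(1) E(1)
      by (auto intro!: has_derivative_eq_rhs[OF has_derivative_scaleR]
          simp: scaleR_sum_right scaleR_sum_left scaleR_add_right sum.distrib ac_simps)
    show "\<forall>i\<in>Basis. Ck_on k S (\<lambda>x. f x *\<^sub>R E i x + D i x *\<^sub>R g x)"
      using D(2) E(2) Suc.IH \<open>Ck_on k S f\<close> \<open>Ck_on k S g\<close> by (auto intro!: Ck_on_add)
  qed
qed

lemma Ck_on_mult:
  fixes f g :: "'a::euclidean_space \<Rightarrow> real"
  shows "Ck_on k S f \<Longrightarrow> Ck_on k S g \<Longrightarrow> Ck_on k S (\<lambda>x. f x * g x)"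
  using Ck_on_scaleR[of k S f g] by simp

lemma Ck_on_inverse:
  fixes f :: "'a::euclidean_space \<Rightarrow> real"
  shows "Ck_on k S f \<Longrightarrow> (\<forall>x\<in>S. f x \<noteq> 0) \<Longrightarrow> Ck_on k S (\<lambda>x. inverse (f x))"
proof (induction k arbitrary: f)
  case 0
  then show ?case by (auto intro: continuous_on_inverse)
next
  case (Suc k)
  obtain D where D: "\<forall>x\<in>S. (f has_derivative (\<lambda>h. \<Sum>i\<in>Basis. (h \<bullet> i) *\<^sub>R D i x)) (at x within S)"
     "\<forall>i\<in>Basis. Ck_on k S (D i)" using Suc.prems(1) by (rule Ck_on_SucE)
  have inv: "Ck_on k S (\<lambda>x. inverse (f x))"
    using Suc.IH Suc.prems Ck_on_Suc_imp_Ck_on by blast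
  show ?case
  proof (rule Ck_on_SucI[where D="\<lambda>i x. (-1) * (inverse (f x) * (D i x * inverse (f x)))"])
    show "\<forall>x\<in>S. ((\<lambda>x. inverse (f x)) has_derivative
        (\<lambda>h. \<Sum>i\<in>Basis. (h \<bullet> i) *\<^sub>R ((-1) * (inverse (f x) * (D i x * inverse (f x))))))
        (at x within S)"
    proof
      fix x assume "x \<in> S"
      with D(1) Suc.prems(2) have "((\<lambda>x. inverse (f x)) has_derivative
          (\<lambda>h. - (inverse (f x) * (\<Sum>i\<in>Basis. (h \<bullet> i) *\<^sub>R D i x) * inverse (f x)))) (at x within S)"
        by (auto intro: Deriv.has_derivative_inverse)
      then show "((\<lambda>x. inverse (f x)) has_derivative
          (\<lambda>h. \<Sum>i\<in>Basis. (h \<bullet> i) *\<^sub>R ((-1) * (inverse (f x) * (D i x * inverse (f x))))))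
          (at x within S)"
        by (rule has_derivative_eq_rhs) (simp add: sum_distrib_left sum_distrib_right sum_negf ac_simps)
    qed
    show "\<forall>i\<in>Basis. Ck_on k S (\<lambda>x. (-1) * (inverse (f x) * (D i x * inverse (f x))))"
      using D(2) inv by (intro ballI Ck_on_mult Ck_on_const) auto
  qed
qed

lemma Ck_on_compose:
  fixes g :: "'c::euclidean_space \<Rightarrow> 'b::real_normed_vector" and \<gamma> :: "'a::euclidean_space \<Rightarrow> 'c"
  shows "Ck_on k S g \<Longrightarrow> Ck_on k A \<gamma> \<Longrightarrow> \<gamma> ` A \<subseteq> S \<Longrightarrow> Ck_on k A (\<lambda>x. g (\<gamma> x))"
proof (induction k arbitrary: g \<gamma>)
  case 0
  then show ?case by (auto intro: continuous_on_compose2)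
next
  case (Suc k)
  obtain D where D: "\<forall>x\<in>S. (g has_derivative (\<lambda>h. \<Sum>j\<in>Basis. (h \<bullet> j) *\<^sub>R D j x)) (at x within S)"
     "\<forall>i\<in>Basis. Ck_on k S (D i)" using Suc.prems(1) by (rule Ck_on_SucE)
  obtain E where E: "\<forall>x\<in>A. (\<gamma> has_derivative (\<lambda>h. \<Sum>i\<in>Basis. (h \<bullet> i) *\<^sub>R E i x)) (at x within A)"
     "\<forall>i\<in>Basis. Ck_on k A (E i)" using Suc.prems(2) by (rule Ck_on_SucE)
  have "Ck_on k A \<gamma>" using Suc.prems Ck_on_Suc_imp_Ck_on by blast
  show ?case
  proof (rule Ck_on_SucI[where D="\<lambda>i x. \<Sum>j\<in>Basis. (E i x \<bullet> j) *\<^sub>R D j (\<gamma> x)"])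
    show "\<forall>x\<in>A. ((\<lambda>x. g (\<gamma> x)) has_derivative
        (\<lambda>h. \<Sum>i\<in>Basis. (h \<bullet> i) *\<^sub>R (\<Sum>j\<in>Basis. (E i x \<bullet> j) *\<^sub>R D j (\<gamma> x)))) (at x within A)"
    proof
      fix x assume x: "x \<in> A"
      have "(g has_derivative (\<lambda>h. \<Sum>j\<in>Basis. (h \<bullet> j) *\<^sub>R D j (\<gamma> x))) (at (\<gamma> x) within \<gamma> ` A)"
        using D(1) Suc.prems(3) x by (auto intro: has_derivative_subset)
      from diff_chain_within[OF E(1)[rule_format, OF x] this]
      show "((\<lambda>x. g (\<gamma> x)) has_derivative
          (\<lambda>h. \<Sum>i\<in>Basis. (h \<bullet> i) *\<^sub>R (\<Sum>j\<in>Basis. (E i x \<bullet> j) *\<^sub>R D j (\<gamma> x)))) (at x within A)"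
        unfolding o_def
        by (rule has_derivative_eq_rhs)
           (auto simp: inner_sum_left scaleR_sum_left scaleR_sum_right intro: sum.swap)
    qed
    show "\<forall>i\<in>Basis. Ck_on k A (\<lambda>x. \<Sum>j\<in>Basis. (E i x \<bullet> j) *\<^sub>R D j (\<gamma> x))"
      using D(2) E(2) Suc \<open>Ck_on k A \<gamma>\<close>
      by (auto intro!: Ck_on_sum Ck_on_scaleR Ck_on_bounded_linear[where L="\<lambda>v. v \<bullet> _"]
          bounded_linear_inner_left)
  qed
qed

lemma Ck_on_Pair:
  "Ck_on k S f \<Longrightarrow> Ck_on k S g \<Longrightarrow> Ck_on k S (\<lambda>x. (f x, g x))"
proof (induction k arbitrary: f g)
  case 0
  then show ?case by (auto intro: continuous_on_Pair)
next
  case (Suc k)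
  obtain D where D: "\<forall>x\<in>S. (f has_derivative (\<lambda>h. \<Sum>i\<in>Basis. (h \<bullet> i) *\<^sub>R D i x)) (at x within S)"
     "\<forall>i\<in>Basis. Ck_on k S (D i)" using Suc.prems(1) by (rule Ck_on_SucE)
  obtain E where E: "\<forall>x\<in>S. (g has_derivative (\<lambda>h. \<Sum>i\<in>Basis. (h \<bullet> i) *\<^sub>R E i x)) (at x within S)"
     "\<forall>i\<in>Basis. Ck_on k S (E i)" using Suc.prems(2) by (rule Ck_on_SucE)
  show ?case
  proof (rule Ck_on_SucI[where D="\<lambda>i x. (D i x, E i x)"])
    show "\<forall>x\<in>S. ((\<lambda>x. (f x, g x)) has_derivative
        (\<lambda>h. \<Sum>i\<in>Basis. (h \<bullet> i) *\<^sub>R (D i x, E i x))) (at x within S)"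
      using D(1) E(1) by (auto intro!: has_derivative_eq_rhs[OF has_derivative_Pair]
          simp: prod_eq_iff fst_sum snd_sum)
    show "\<forall>i\<in>Basis. Ck_on k S (\<lambda>x. (D i x, E i x))" using D(2) E(2) Suc.IH by auto
  qed
qed

lemma Ck_on_Suc_realI:
  fixes f f' :: "real \<Rightarrow> real"
  assumes "\<forall>x\<in>S. (f has_real_derivative f' x) (at x within S)" and "Ck_on k S f'"
  shows "Ck_on (Suc k) S f"
proof (rule Ck_on_SucI[where D="\<lambda>i x. f' x"])
  show "\<forall>x\<in>S. (f has_derivative (\<lambda>h. \<Sum>i\<in>Basis. (h \<bullet> i) *\<^sub>R f' x)) (at x within S)"
  proof
    fix x assume "x \<in> S"
    with assms(1) have "(f has_derivative (\<lambda>h. f' x * h)) (at x within S)"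
      by (simp add: has_field_derivative_def)
    then show "(f has_derivative (\<lambda>h. \<Sum>i\<in>Basis. (h \<bullet> i) *\<^sub>R f' x)) (at x within S)"
      by (rule has_derivative_eq_rhs) (simp add: mult.commute)
  qed
qed (use assms(2) in simp)

lemma Ck_on_Suc_pairE:
  fixes f :: "real \<times> real \<Rightarrow> 'b::real_normed_vector"
  assumes "Ck_on (Suc k) S f"
  obtains Ds Dt where "\<forall>p\<in>S. (f has_derivative (\<lambda>h. fst h *\<^sub>R Ds p + snd h *\<^sub>R Dt p)) (at p within S)"
    and "Ck_on k S Ds" "Ck_on k S Dt"
proof -
  obtain D where "\<forall>p\<in>S. (f has_derivative (\<lambda>h. \<Sum>i\<in>Basis. (h \<bullet> i) *\<^sub>R D i p)) (at p within S)"
    and "\<forall>i\<in>Basis. Ck_on k S (D i)"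
    using assms by (rule Ck_on_SucE)
  then show ?thesis
    using that[of "D (1, 0)" "D (0, 1)"] by (simp add: Basis_prod_def inner_prod_def add.commute)
qed

lemma Ck_on_Suc_Im_pairE:
  fixes f :: "real \<times> real \<Rightarrow> complex"
  assumes "Ck_on (Suc k) S f"
  obtains Fs Ft where
    "\<forall>p\<in>S. ((\<lambda>p. Im (f p)) has_derivative (\<lambda>h. fst h * Fs p + snd h * Ft p)) (at p within S)"
    and "Ck_on k S Fs" "Ck_on k S Ft"
proof -
  obtain Ds Dt where D: "\<forall>p\<in>S. (f has_derivative (\<lambda>h. fst h *\<^sub>R Ds p + snd h *\<^sub>R Dt p)) (at p within S)"
    and "Ck_on k S Ds" "Ck_on k S Dt"
    using assms by (rule Ck_on_Suc_pairE)
  have "\<forall>p\<in>S. ((\<lambda>p. Im (f p)) has_derivative (\<lambda>h. fst h * Im (Ds p) + snd h * Im (Dt p))) (at p within S)"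
    using D bounded_linear.has_derivative[OF bounded_linear_Im] by fastforce
  moreover have "Ck_on k S (\<lambda>p. Im (Ds p))" "Ck_on k S (\<lambda>p. Im (Dt p))"
    using \<open>Ck_on k S Ds\<close> \<open>Ck_on k S Dt\<close> by (simp_all add: Ck_on_bounded_linear[OF bounded_linear_Im])
  ultimately show ?thesis by (rule that)
qed

section \<open>Implicit functions in the plane\<close>

lemma has_derivative_snd_slice:
  fixes f :: "real \<times> real \<Rightarrow> 'b::real_normed_vector"
  assumes "(f has_derivative (\<lambda>h. fst h *\<^sub>R Ds + snd h *\<^sub>R Dt)) (at (x, y) within S)"
    and "{x} \<times> I \<subseteq> S" "open I" "y \<in> I"
  shows "((\<lambda>t. f (x, t)) has_derivative (\<lambda>h. h *\<^sub>R Dt)) (at y)"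
proof -
  have "((\<lambda>t. (x, t)) has_derivative (\<lambda>h. (0, h))) (at y within I)"
    by (auto intro!: derivative_eq_intros)
  moreover have "(f has_derivative (\<lambda>h. fst h *\<^sub>R Ds + snd h *\<^sub>R Dt)) (at (x, y) within (\<lambda>t. (x, t)) ` I)"
    by (rule has_derivative_subset[OF assms(1)]) (use assms(2) in auto)
  ultimately have "((\<lambda>t. f (x, t)) has_derivative (\<lambda>h. h *\<^sub>R Dt)) (at y within I)"
    using diff_chain_within by (fastforce simp: o_def)
  then show ?thesis using at_within_open[OF assms(4,3)] by simp
qed

lemma partial_snd_of_sin_slice:
  fixes F :: "real \<times> real \<Rightarrow> real"
  assumes "(F has_derivative (\<lambda>h. fst h * Fs + snd h * Ft)) (at (x, c) within S)"
    and "{x} \<times> I \<subseteq> S" "open I" "c \<in> I"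
    and sin: "\<forall>t\<in>I. F (x, t) = sin t"
  shows "Ft = cos c"
proof -
  have "((\<lambda>t. F (x, t)) has_derivative (\<lambda>h. h * cos c)) (at c)"
    by (rule has_derivative_transform_within_open[OF _ assms(3,4)])
       (use sin in \<open>auto intro!: derivative_eq_intros\<close>)
  with has_derivative_snd_slice[of F Fs Ft x c S I] assms(1-4)
  have "(\<lambda>h::real. h * Ft) = (\<lambda>h. h * cos c)"
    by (auto intro: has_derivative_unique)
  then show ?thesis by (metis mult_1)
qed

lemma continuous_on_pos_box:
  fixes f :: "real \<times> real \<Rightarrow> real"
  assumes f: "continuous_on ({0..\<epsilon>} \<times> I) f" and "0 < \<epsilon>" "open I" "c \<in> I" "0 < f (0, c)"
  obtains \<epsilon>1 \<delta> where "0 < \<epsilon>1" "0 < \<delta>" "\<delta> \<le> 1/2"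
    and "{0..\<epsilon>1} \<times> {c - \<delta>..c + \<delta>} \<subseteq> {0..\<epsilon>} \<times> I"
    and "\<forall>p\<in>{0..\<epsilon>1} \<times> {c - \<delta>..c + \<delta>}. f (0, c) / 2 \<le> f p"
proof -
  have "(0, c) \<in> {0..\<epsilon>} \<times> I" using assms by auto
  then obtain r where "r > 0"
    and r: "\<forall>p\<in>{0..\<epsilon>} \<times> I. dist p (0, c) < r \<longrightarrow> dist (f p) (f (0, c)) < f (0, c) / 2"
    using continuous_on_iff[THEN iffD1, OF f] \<open>0 < f (0, c)\<close> by (meson half_gt_zero)
  obtain \<delta>0 where "\<delta>0 > 0" "ball c \<delta>0 \<subseteq> I"
    using \<open>open I\<close> \<open>c \<in> I\<close> open_contains_ball by blast
  define \<delta> where "\<delta> = min (min (\<delta>0 / 2) (r / 3)) (1/2)"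
  define \<epsilon>1 where "\<epsilon>1 = min \<epsilon> (r / 3)"
  have box: "{0..\<epsilon>1} \<times> {c - \<delta>..c + \<delta>} \<subseteq> {0..\<epsilon>} \<times> I"
    using \<open>ball c \<delta>0 \<subseteq> I\<close> \<open>\<delta>0 > 0\<close>
    by (auto simp: \<delta>_def \<epsilon>1_def dist_real_def subset_iff)
  have "f (0, c) / 2 \<le> f p" if p: "p \<in> {0..\<epsilon>1} \<times> {c - \<delta>..c + \<delta>}" for p
  proof -
    have "dist p (0, c) \<le> norm (fst p) + norm (snd p - c)"
      using norm_Pair_le[of "fst p" "snd p - c"] by (cases p) (simp add: dist_norm)
    also have "\<dots> < r" using p \<open>r > 0\<close> by (auto simp: \<delta>_def \<epsilon>1_def)
    finally have "dist p (0, c) < r" .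
    moreover have "p \<in> {0..\<epsilon>} \<times> I" using p box by blast
    ultimately have "dist (f p) (f (0, c)) < f (0, c) / 2" using r by blast
    then show ?thesis unfolding dist_real_def by linarith
  qed
  then show ?thesis
    using that[of \<epsilon>1 \<delta>] box \<open>0 < \<epsilon>\<close> \<open>r > 0\<close> \<open>\<delta>0 > 0\<close> by (auto simp: \<delta>_def \<epsilon>1_def)
qed

lemma mean_value_convex_pair:
  fixes F Fs Ft :: "real \<times> real \<Rightarrow> real"
  assumes "convex B"
    and F': "\<forall>p\<in>B. (F has_derivative (\<lambda>h. fst h * Fs p + snd h * Ft p)) (at p within B)"
    and p: "p \<in> B" and q: "q \<in> B"
  obtains w where "w \<in> B" "dist w p \<le> dist q p"
    and "F q - F p = (fst q - fst p) * Fs w + (snd q - snd p) * Ft w"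
proof -
  define l where "l x = p + x *\<^sub>R (q - p)" for x :: real
  have l_in: "l x \<in> B" if "0 \<le> x" "x \<le> 1" for x
  proof -
    have "l x = (1 - x) *\<^sub>R p + x *\<^sub>R q" by (simp add: l_def algebra_simps)
    then show ?thesis using \<open>convex B\<close> p q that by (simp add: convex_def)
  qed
  have "\<exists>x\<in>{0<..<1}. (F \<circ> l) 1 - (F \<circ> l) 0 =
     (\<lambda>h. fst (h *\<^sub>R (q - p)) * Fs (l x) + snd (h *\<^sub>R (q - p)) * Ft (l x)) (1 - 0)"
  proof (rule mvt_simple)
    fix x :: real assume x: "0 \<le> x" "x \<le> 1"
    have "(F has_derivative (\<lambda>h. fst h * Fs (l x) + snd h * Ft (l x))) (at (l x) within B)"
      using F' l_in x by blast
    then have F'_l: "(F has_derivative (\<lambda>h. fst h * Fs (l x) + snd h * Ft (l x))) (at (l x) within l ` {0..1})"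
      by (rule has_derivative_subset) (use l_in in auto)
    have "(l has_derivative (\<lambda>h. h *\<^sub>R (q - p))) (at x within {0..1})"
      unfolding l_def by (auto intro!: derivative_eq_intros)
    from diff_chain_within[OF this F'_l]
    show "((F \<circ> l) has_derivative
        (\<lambda>h. fst (h *\<^sub>R (q - p)) * Fs (l x) + snd (h *\<^sub>R (q - p)) * Ft (l x))) (at x within {0..1})"
      by (simp add: o_def)
  qed simp
  then obtain x where x: "0 < x" "x < 1"
    and eq: "F (l 1) - F (l 0) = (fst q - fst p) * Fs (l x) + (snd q - snd p) * Ft (l x)"
    by auto
  have "dist (l x) p = x * dist q p" using x by (simp add: l_def dist_norm)
  also have "\<dots> \<le> dist q p" using x by (simp add: mult_left_le_one_le)
  finally have "dist (l x) p \<le> dist q p" .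
  moreover have "l 1 = q" "l 0 = p" by (simp_all add: l_def)
  ultimately show ?thesis
    using that[of "l x"] eq l_in[of x] x by simp
qed

lemma implicit_root_displacement_le:
  fixes F Fs Ft :: "real \<times> real \<Rightarrow> real"
  assumes "convex B"
    and F': "\<forall>p\<in>B. (F has_derivative (\<lambda>h. fst h * Fs p + snd h * Ft p)) (at p within B)"
    and Ft: "\<forall>p\<in>B. m \<le> Ft p" and "0 \<le> m"
    and "(s, c) \<in> B" "(s, t) \<in> B" "F (s, t) = 0"
  shows "\<bar>t - c\<bar> * m \<le> \<bar>F (s, c)\<bar>"
proof -
  obtain w where "w \<in> B" and "F (s, t) - F (s, c) = (t - c) * Ft w"
    using mean_value_convex_pair[OF \<open>convex B\<close> F' \<open>(s, c) \<in> B\<close> \<open>(s, t) \<in> B\<close>]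
    by (metis add_0 diff_self fst_conv mult_zero_left snd_conv)
  moreover have "0 \<le> Ft w" using Ft \<open>w \<in> B\<close> \<open>0 \<le> m\<close> by force
  ultimately have "\<bar>F (s, c)\<bar> = \<bar>t - c\<bar> * Ft w"
    using \<open>F (s, t) = 0\<close> by (metis abs_minus_cancel abs_mult abs_of_nonneg diff_0)
  also have "\<dots> \<ge> \<bar>t - c\<bar> * m"
    using Ft \<open>w \<in> B\<close> by (simp add: mult_left_mono)
  finally show ?thesis .
qed

lemma implicit_graph_difference_quotient:
  fixes F Fs Ft :: "real \<times> real \<Rightarrow> real" and T :: "real \<Rightarrow> real"
  assumes "convex B"
    and F': "\<forall>p\<in>B. (F has_derivative (\<lambda>h. fst h * Fs p + snd h * Ft p)) (at p within B)"
    and Fs: "\<forall>p\<in>B. \<bar>Fs p\<bar> \<le> M" and Ft: "\<forall>p\<in>B. m \<le> Ft p" and "0 < m"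
    and graph: "\<forall>s\<in>A. (s, T s) \<in> B \<and> F (s, T s) = 0"
    and "s \<in> A" "s0 \<in> A" "s \<noteq> s0"
  obtains w where "w \<in> B" "dist w (s0, T s0) \<le> (1 + M / m) * \<bar>s - s0\<bar>"
    and "(T s - T s0) / (s - s0) = - Fs w / Ft w"
proof -
  obtain w where "w \<in> B" and w: "dist w (s0, T s0) \<le> dist (s, T s) (s0, T s0)"
    and "F (s, T s) - F (s0, T s0) = (s - s0) * Fs w + (T s - T s0) * Ft w"
    using mean_value_convex_pair[OF \<open>convex B\<close> F', of "(s0, T s0)" "(s, T s)"] graph
      \<open>s \<in> A\<close> \<open>s0 \<in> A\<close> by auto
  then have incr: "(T s - T s0) * Ft w = - ((s - s0) * Fs w)"
    using graph \<open>s \<in> A\<close> \<open>s0 \<in> A\<close> by (simp add: eq_neg_iff_add_eq_0 add.commute)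
  have "m \<le> Ft w" using Ft \<open>w \<in> B\<close> by blast
  then have "(T s - T s0) / (s - s0) = - Fs w / Ft w"
    using incr \<open>s \<noteq> s0\<close> \<open>0 < m\<close> by (auto simp: field_simps)
  moreover have "dist (s, T s) (s0, T s0) \<le> (1 + M / m) * \<bar>s - s0\<bar>"
  proof -
    have "\<bar>T s - T s0\<bar> * m \<le> \<bar>T s - T s0\<bar> * Ft w"
      using \<open>m \<le> Ft w\<close> by (simp add: mult_left_mono)
    also have "\<dots> = \<bar>s - s0\<bar> * \<bar>Fs w\<bar>"
      using incr \<open>m \<le> Ft w\<close> \<open>0 < m\<close> by (metis abs_minus_cancel abs_mult abs_of_pos order_less_le_trans)
    also have "\<dots> \<le> \<bar>s - s0\<bar> * M" using Fs \<open>w \<in> B\<close> by (simp add: mult_left_mono)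
    finally have "\<bar>T s - T s0\<bar> \<le> \<bar>s - s0\<bar> * (M / m)"
      using \<open>0 < m\<close> by (simp add: field_simps)
    then show ?thesis
      using norm_Pair_le[of "s - s0" "T s - T s0"] by (simp add: dist_norm algebra_simps)
  qed
  ultimately show ?thesis
    using that \<open>w \<in> B\<close> order_trans[OF w] by blast
qed

lemma implicit_graph_has_derivative:
  fixes F Fs Ft :: "real \<times> real \<Rightarrow> real" and T :: "real \<Rightarrow> real"
  assumes "convex B" "compact B"
    and F': "\<forall>p\<in>B. (F has_derivative (\<lambda>h. fst h * Fs p + snd h * Ft p)) (at p within B)"
    and cont: "continuous_on B Fs" "continuous_on B Ft"
    and Ft: "\<forall>p\<in>B. m \<le> Ft p" and "0 < m"
    and graph: "\<forall>s\<in>A. (s, T s) \<in> B \<and> F (s, T s) = 0"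
    and "s0 \<in> A"
  shows "(T has_real_derivative - Fs (s0, T s0) / Ft (s0, T s0)) (at s0 within A)"
proof -
  define g where "g p = - Fs p / Ft p" for p
  define p0 where "p0 = (s0, T s0)"
  have "p0 \<in> B" using graph \<open>s0 \<in> A\<close> by (simp add: p0_def)
  have "\<forall>p\<in>B. Ft p \<noteq> 0" using Ft \<open>0 < m\<close> by force
  then have "continuous_on B g"
    unfolding g_def using cont by (intro continuous_intros) auto
  obtain M where "0 < M" and M: "\<forall>p\<in>B. \<bar>Fs p\<bar> \<le> M"
    using compact_imp_bounded[OF compact_continuous_image[OF cont(1) \<open>compact B\<close>]]
    by (auto simp: bounded_pos)
  have "0 < 1 + M / m" using \<open>0 < M\<close> \<open>0 < m\<close> by (simp add: add_pos_nonneg)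
  show ?thesis
    unfolding has_field_derivative_iff Lim_within
  proof (intro allI impI)
    fix e :: real assume "e > 0"
    then obtain d1 where "d1 > 0" and d1: "\<forall>w\<in>B. dist w p0 < d1 \<longrightarrow> dist (g w) (g p0) < e"
      using continuous_on_iff[THEN iffD1, OF \<open>continuous_on B g\<close>, rule_format, OF \<open>p0 \<in> B\<close>] by auto
    show "\<exists>d>0. \<forall>s\<in>A. 0 < dist s s0 \<and> dist s s0 < d \<longrightarrow>
        dist ((T s - T s0) / (s - s0)) (- Fs (s0, T s0) / Ft (s0, T s0)) < e"
    proof (intro exI[of _ "d1 / (1 + M / m)"] conjI ballI impI)
      show "d1 / (1 + M / m) > 0" using \<open>d1 > 0\<close> \<open>0 < 1 + M / m\<close> by simp
      fix s assume "s \<in> A" and s: "0 < dist s s0 \<and> dist s s0 < d1 / (1 + M / m)"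
      then obtain w where "w \<in> B" and w: "dist w p0 \<le> (1 + M / m) * \<bar>s - s0\<bar>"
        and quotient: "(T s - T s0) / (s - s0) = g w"
        using implicit_graph_difference_quotient[OF \<open>convex B\<close> F' M Ft \<open>0 < m\<close> graph \<open>s \<in> A\<close> \<open>s0 \<in> A\<close>]
        unfolding p0_def g_def by auto
      have "(1 + M / m) * \<bar>s - s0\<bar> < d1"
        using s \<open>0 < 1 + M / m\<close> by (simp add: dist_real_def field_simps)
      then have "dist (g w) (g p0) < e"
        using d1 \<open>w \<in> B\<close> order_le_less_trans[OF w] by blast
      then show "dist ((T s - T s0) / (s - s0)) (- Fs (s0, T s0) / Ft (s0, T s0)) < e"
        by (simp add: quotient g_def p0_def)
    qed
  qed
qed

lemma implicit_graph_Ck_on: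
  fixes F Fs Ft :: "real \<times> real \<Rightarrow> real" and T :: "real \<Rightarrow> real"
  assumes "convex B" "compact B"
    and F': "\<forall>p\<in>B. (F has_derivative (\<lambda>h. fst h * Fs p + snd h * Ft p)) (at p within B)"
    and Fs: "Ck_on k B Fs" and Ft: "Ck_on k B Ft"
    and Ft_ge: "\<forall>p\<in>B. m \<le> Ft p" and "0 < m"
    and graph: "\<forall>s\<in>A. (s, T s) \<in> B \<and> F (s, T s) = 0"
  shows "Ck_on (Suc k) A T"
proof -
  define g where "g p = - Fs p / Ft p" for p
  have T': "(T has_real_derivative g (s, T s)) (at s within A)" if "s \<in> A" for s
    unfolding g_def
    by (rule implicit_graph_has_derivative[OF assms(1,2) F' _ _ Ft_ge \<open>0 < m\<close> graph that])
       (use Fs Ft Ck_on_imp_continuous_on in auto)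
  have "\<forall>p\<in>B. Ft p \<noteq> 0" using Ft_ge \<open>0 < m\<close> by force
  moreover have "g = (\<lambda>p. (-1) * (Fs p * inverse (Ft p)))"
    by (simp add: g_def divide_inverse fun_eq_iff)
  ultimately have g: "Ck_on k B g"
    by (simp only:) (intro Ck_on_mult Ck_on_const Ck_on_inverse Fs Ft)
  have "Ck_on j A T" if "j \<le> Suc k" for j
    using that
  proof (induction j)
    case 0
    show ?case
      using T' by (auto simp: continuous_on_eq_continuous_within intro: DERIV_continuous)
  next
    case (Suc j)
    then have "Ck_on j A (\<lambda>s. (s, T s))"
      by (simp add: Ck_on_Pair Ck_on_ident)
    with Suc.prems have "Ck_on j A (\<lambda>s. g (s, T s))"
      using graph by (intro Ck_on_compose[OF Ck_on_le[OF _ g]]) auto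
    then show ?case using T' by (intro Ck_on_Suc_realI) auto
  qed
  then show ?thesis by simp
qed

section \<open>Periodic curves close to the unit circle\<close>

lemma norm_exp_i_minus_1: "cmod (exp (\<i> * of_real u) - 1) = 2 * \<bar>sin (u / 2)\<bar>"
proof -
  have "(cmod (exp (\<i> * of_real u) - 1))^2 = (cos u - 1)^2 + (sin u)^2"
    by (simp add: cmod_power2 Re_exp Im_exp)
  also have "\<dots> = 2 - 2 * cos u"
    by (simp add: power2_eq_square algebra_simps sin_squared_eq)
  also have "\<dots> = (2 * \<bar>sin (u / 2)\<bar>)^2"
    using cos_double_sin[of "u/2"] by (simp add: power_mult_distrib)
  finally show ?thesis
    by (metis abs_of_nonneg norm_ge_zero power2_eq_imp_eq zero_le_mult_iff abs_ge_zero zero_le_numeral)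
qed

lemma norm_exp_i_diff_le: "cmod (exp (\<i> * of_real x) - exp (\<i> * of_real y)) \<le> \<bar>x - y\<bar>"
proof -
  have "exp (\<i> * of_real x) - exp (\<i> * of_real y) = exp (\<i> * of_real y) * (exp (\<i> * of_real (x - y)) - 1)"
    by (simp add: algebra_simps flip: exp_add)
  then have "cmod (exp (\<i> * of_real x) - exp (\<i> * of_real y)) = cmod (exp (\<i> * of_real (x - y)) - 1)"
    by (simp add: norm_mult)
  also have "\<dots> = 2 * \<bar>sin ((x - y) / 2)\<bar>"
    by (rule norm_exp_i_minus_1)
  also have "\<dots> \<le> \<bar>x - y\<bar>"
    using abs_sin_x_le_abs_x[of "(x - y) / 2"] by simp
  finally show ?thesis .
qed

lemma norm_exp_i_minus_1_ge:
  assumes "\<bar>h\<bar> \<le> pi" and "0 \<le> d" and "d \<le> \<bar>h\<bar>"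
  shows "2 * sin (d / 2) \<le> cmod (exp (\<i> * of_real h) - 1)"
proof -
  have "sin (d / 2) \<le> sin (\<bar>h\<bar> / 2)"
    using assms by (intro sin_monotone_2pi_le) auto
  also have "\<dots> = \<bar>sin (h / 2)\<bar>"
    using assms sin_ge_zero[of "\<bar>h\<bar> / 2"] by (cases "h \<ge> 0") auto
  finally show ?thesis by (simp add: norm_exp_i_minus_1)
qed

lemma simple_loop_near_circle_winding:
  fixes \<gamma> :: "real \<Rightarrow> complex" and n :: int
  assumes simple: "simple_path \<gamma>" and loop: "pathfinish \<gamma> = pathstart \<gamma>"
    and near: "\<And>u. u \<in> {0..1} \<Longrightarrow> cmod (\<gamma> u - exp (\<i> * of_real (2 * pi * n * u))) < 1"
  shows "\<bar>n\<bar> \<le> 1"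
proof -
  define p where "p u = \<i> * of_real (2 * pi * n * u)" for u :: real
  have "path p" unfolding p_def path_def by (intro continuous_intros)
  then have winding_circle: "winding_number (exp \<circ> p) 0 = n"
    using winding_number_compose_exp by (simp add: p_def pathfinish_def pathstart_def)
  have unit: "cmod ((exp \<circ> p) u) = 1" for u
    by (simp add: p_def)
  have hom: "homotopic_loops (-{0}) \<gamma> (exp \<circ> p)"
  proof (rule homotopic_loops_linear)
    show "closed_segment (\<gamma> t) ((exp \<circ> p) t) \<subseteq> - {0}" if "t \<in> {0..1}" for t
    proof
      fix x assume "x \<in> closed_segment (\<gamma> t) ((exp \<circ> p) t)"
      then have "dist x ((exp \<circ> p) t) \<le> dist (\<gamma> t) ((exp \<circ> p) t)"
        using dist_in_closed_segment by blast
      then have "cmod (x - (exp \<circ> p) t) < 1"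
        using near[OF that] by (simp add: dist_norm p_def)
      then show "x \<in> - {0}" using unit[of t] by auto
    qed
    show "path (exp \<circ> p)" using \<open>path p\<close> by (simp add: path_def p_def continuous_intros)
    show "pathfinish (exp \<circ> p) = pathstart (exp \<circ> p)"
      using exp_integer_2pi[of n] by (simp add: p_def pathfinish_def pathstart_def mult.commute)
  qed (use simple loop simple_path_imp_path in auto)
  have "0 \<notin> path_image \<gamma>"
    using homotopic_loops_imp_subset[OF hom] by auto
  moreover have "winding_number \<gamma> 0 = n"
    using winding_number_homotopic_loops[OF hom] winding_circle by simp
  ultimately have "of_int n = (of_int (-1) :: complex) \<or> of_int n = (of_int 0 :: complex)
      \<or> of_int n = (of_int 1 :: complex)"
    using simple_closed_path_winding_number_cases[OF simple loop] by force
  then show ?thesis unfolding of_int_eq_iff by auto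
qed

lemma no_short_period_near_circle:
  fixes z :: "real \<Rightarrow> complex"
  assumes I: "{0..2*pi} \<subseteq> I" and T: "0 < T" "T \<le> 1"
    and periodic: "\<forall>t. t \<in> I \<and> t + T \<in> I \<longrightarrow> z (t + T) = z t"
    and near: "\<forall>t\<in>I. cmod (z t - exp (\<i> * t)) \<le> \<rho>" and "\<rho> \<le> 1/4"
  shows False
proof -
  have shift: "z (pi - real k * T) = z pi" if "real k * T \<le> pi" for k :: nat
    using that
  proof (induction k)
    case (Suc k)
    define t where "t = pi - real (Suc k) * T"
    have "t \<in> I" "t + T \<in> I"
      using Suc.prems T pi_gt3 by (auto simp: t_def algebra_simps intro!: subsetD[OF I])
    then have "z t = z (t + T)" using periodic by auto
    also have "\<dots> = z pi"
      using Suc T by (simp add: t_def algebra_simps)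
    finally show ?case by (simp add: t_def)
  qed simp
  define k where "k = nat \<lfloor>pi / T\<rfloor>"
  define \<tau> where "\<tau> = pi - real k * T"
  have "real k = of_int \<lfloor>pi / T\<rfloor>"
    using T by (simp add: k_def)
  then have kT: "real k * T \<le> pi" and "pi < (real k + 1) * T"
    using T floor_divide_lower[of T pi] floor_correct[of "pi / T"] by (auto simp: field_simps)
  then have \<tau>: "0 \<le> \<tau>" "\<tau> < T" "\<tau> \<le> 2*pi"
    using T pi_gt3 by (auto simp: \<tau>_def algebra_simps)
  have "2 = cmod ((-1::complex) - 1)" by simp
  also have "\<dots> = cmod ((exp (\<i> * pi) - z pi) + (z \<tau> - exp (\<i> * \<tau>)) + (exp (\<i> * \<tau>) - exp (\<i> * 0)))"
    using shift[OF kT] by (simp add: \<tau>_def)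
  also have "\<dots> \<le> cmod (exp (\<i> * pi) - z pi) + cmod (z \<tau> - exp (\<i> * \<tau>)) + cmod (exp (\<i> * \<tau>) - exp (\<i> * 0))"
    by (rule order_trans[OF norm_triangle_ineq add_right_mono[OF norm_triangle_ineq]])
  also have "\<dots> \<le> \<rho> + \<rho> + \<bar>\<tau> - 0\<bar>"
  proof (intro add_mono)
    have "pi \<in> I" "\<tau> \<in> I" using I \<tau> pi_gt3 by auto
    then show "cmod (exp (\<i> * pi) - z pi) \<le> \<rho>" "cmod (z \<tau> - exp (\<i> * \<tau>)) \<le> \<rho>"
      using near by (auto simp only: norm_minus_commute)
  qed (use norm_exp_i_diff_le[of \<tau> 0] in simp)
  finally show False using \<tau> T \<open>\<rho> \<le> 1/4\<close> by simp
qed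

lemma period_near_2pi:
  fixes z :: "real \<Rightarrow> complex"
  assumes I: "{0..2*pi} \<subseteq> I" and T: "0 < T" "{0..T} \<subseteq> I"
    and periodic: "\<forall>t. t \<in> I \<and> t + T \<in> I \<longrightarrow> z (t + T) = z t"
    and simple: "simple_path (\<lambda>u. z (u * T))"
    and loop: "pathfinish (\<lambda>u. z (u * T)) = pathstart (\<lambda>u. z (u * T))"
    and near: "\<forall>t\<in>I. cmod (z t - exp (\<i> * t)) \<le> \<rho>"
    and \<delta>: "0 < \<delta>" "\<delta> \<le> 1/2" and \<rho>: "\<rho> \<le> 1/4" "\<rho> \<le> sin (\<delta> / 2) / 2"
  shows "\<bar>T - 2*pi\<bar> < \<delta>"
proof -
  define n where "n = round (T / (2*pi))"
  define h where "h = T - 2*pi*n"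
  have "\<bar>of_int n - T / (2*pi)\<bar> \<le> 1/2"
    unfolding n_def by (rule of_int_round_abs_le)
  then have "\<bar>2*pi * (of_int n - T / (2*pi))\<bar> \<le> 2*pi * (1/2)"
    by (simp add: abs_mult)
  then have h_le_pi: "\<bar>h\<bar> \<le> pi"
    by (simp add: h_def algebra_simps abs_minus_commute)
  have "0 \<in> I" "T \<in> I" using I T by auto
  then have "z T = z 0" using periodic by force
  have "cis T = cis h * cis (2*pi*n)"
    unfolding cis_mult by (simp add: h_def)
  then have "exp (\<i> * of_real T) = exp (\<i> * of_real h)"
    using cis_multiple_2pi[of "of_int n"] by (simp add: cis_conv_exp)
  then have "exp (\<i> * of_real h) - 1 = (exp (\<i> * of_real T) - z T) + (z 0 - exp (\<i> * of_real 0))"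
    using \<open>z T = z 0\<close> by simp
  also have "cmod \<dots> \<le> \<rho> + \<rho>"
    using near \<open>0 \<in> I\<close> \<open>T \<in> I\<close>
    by (intro order_trans[OF norm_triangle_ineq] add_mono) (auto simp only: norm_minus_commute)
  finally have "cmod (exp (\<i> * of_real h) - 1) < 2 * sin (\<delta> / 2)"
    using \<rho> \<delta> sin_gt_zero[of "\<delta> / 2"] pi_gt3 by auto
  then have h: "\<bar>h\<bar> < \<delta>"
    using norm_exp_i_minus_1_ge[OF h_le_pi, of \<delta>] \<delta> by (cases "\<delta> \<le> \<bar>h\<bar>") auto
  have "n \<ge> 1"
  proof (rule ccontr)
    assume "\<not> n \<ge> 1"
    then consider "n = 0" | "n \<le> -1" by linarith
    then show False
    proof cases
      case 1
      then have "T \<le> 1" using h \<delta> by (simp add: h_def)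
      then show False
        using no_short_period_near_circle[OF I T(1) _ periodic near \<rho>(1)] by blast
    next
      case 2
      then have "2*pi*n \<le> 2*pi*(-1)" by (intro mult_left_mono) auto
      then show False using T h \<delta> pi_gt3 by (simp add: h_def)
    qed
  qed
  moreover have "\<bar>n\<bar> \<le> 1"
  proof (rule simple_loop_near_circle_winding[OF simple loop])
    fix u :: real assume u: "u \<in> {0..1}"
    then have "u * T \<in> I" using T by (auto intro!: subsetD[OF T(2)] mult_left_le_one_le)
    have "cmod (z (u * T) - exp (\<i> * of_real (2 * pi * n * u))) \<le> \<rho> + \<bar>u * T - 2 * pi * n * u\<bar>"
      using near \<open>u * T \<in> I\<close> norm_exp_i_diff_le[of "u * T" "2 * pi * n * u"]
      by (intro norm_diff_triangle_le) auto
    also have "\<bar>u * T - 2 * pi * n * u\<bar> = u * \<bar>h\<bar>"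
    proof -
      have "u * T - 2 * pi * n * u = u * h" by (simp add: h_def algebra_simps)
      then show ?thesis using u by (simp add: abs_mult)
    qed
    also have "u * \<bar>h\<bar> \<le> \<bar>h\<bar>" using u by (simp add: mult_left_le_one_le)
    finally show "cmod (z (u * T) - exp (\<i> * of_real (2 * pi * n * u))) < 1"
      using h \<delta> \<rho> by simp
  qed
  ultimately have "n = 1" by simp
  then show ?thesis using h by (simp add: h_def)
qed

section \<open>The period function\<close>

lemma expansion_at_zero:
  fixes zh :: "real \<times> real \<Rightarrow> complex" and a C \<epsilon> t :: real
  assumes C: "\<forall>s\<in>{0..\<epsilon>}. \<forall>t\<in>I.
        cmod (zh (s, t) - (exp (\<i> * t) - of_real ((4/3) * a * s^4) * exp (3 * \<i> * t)))
          \<le> C * s^5"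
    and "0 \<le> \<epsilon>" "t \<in> I"
  shows "zh (0, t) = exp (\<i> * t)"
proof -
  have "cmod (zh (0, t) - exp (\<i> * t)) \<le> 0"
    using C[rule_format, of 0 t] assms(2,3) by simp
  then show ?thesis by simp
qed

lemma expansion_near_circle:
  fixes zh :: "real \<times> real \<Rightarrow> complex" and a C \<epsilon> s t :: real
  assumes C: "\<forall>s\<in>{0..\<epsilon>}. \<forall>t\<in>I.
        cmod (zh (s, t) - (exp (\<i> * t) - of_real ((4/3) * a * s^4) * exp (3 * \<i> * t)))
          \<le> C * s^5"
    and s: "s \<in> {0..\<epsilon>}" "s \<le> 1" and t: "t \<in> I"
  shows "cmod (zh (s, t) - exp (\<i> * t)) \<le> (\<bar>C\<bar> + 2 * \<bar>a\<bar>) * s"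
proof -
  have "s^4 \<le> s" "s^5 \<le> s"
    using s power_decreasing[of 1 4 s] power_decreasing[of 1 5 s] by auto
  have "cmod (exp (3 * \<i> * of_real t)) = 1"
    using norm_exp_i_times[of "3 * t"] by (simp add: mult.assoc)
  then have "cmod (of_real ((4/3) * a * s^4) * exp (3 * \<i> * t)) = (4/3) * \<bar>a\<bar> * s^4"
    using s by (simp add: norm_mult norm_power)
  moreover have "cmod (zh (s, t) - (exp (\<i> * t) - of_real ((4/3) * a * s^4) * exp (3 * \<i> * t)))
          \<le> C * s^5"
    using C s t by blast
  ultimately have "cmod (zh (s, t) - exp (\<i> * t)) \<le> C * s^5 + (4/3) * \<bar>a\<bar> * s^4"
    using norm_triangle_ineq4[of "zh (s, t) - (exp (\<i> * t) - of_real ((4/3) * a * s^4) * exp (3 * \<i> * t))"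
        "of_real ((4/3) * a * s^4) * exp (3 * \<i> * t)"] by simp
  also have "\<dots> \<le> \<bar>C\<bar> * s + 2 * \<bar>a\<bar> * s"
    using s \<open>s^4 \<le> s\<close> \<open>s^5 \<le> s\<close>
    by (intro add_mono mult_mono) (auto intro: order_trans[OF abs_ge_self])
  finally show ?thesis by (simp add: algebra_simps)
qed

lemma expansion_Im_at_2pi:
  fixes zh :: "real \<times> real \<Rightarrow> complex" and a C \<epsilon> s :: real
  assumes C: "\<forall>s\<in>{0..\<epsilon>}. \<forall>t\<in>I.
        cmod (zh (s, t) - (exp (\<i> * t) - of_real ((4/3) * a * s^4) * exp (3 * \<i> * t)))
          \<le> C * s^5"
    and "s \<in> {0..\<epsilon>}" "2 * pi \<in> I"
  shows "\<bar>Im (zh (s, 2 * pi))\<bar> \<le> C * s^5"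
proof -
  have "exp (\<i> * of_real (2 * pi)) = 1" "exp (3 * \<i> * of_real (2 * pi)) = 1"
    using exp_integer_2pi[of 1] exp_integer_2pi[of 3] by (simp_all add: mult_ac)
  then have "Im (zh (s, 2 * pi)) =
      Im (zh (s, 2 * pi) - (exp (\<i> * of_real (2 * pi)) - of_real ((4/3) * a * s^4) * exp (3 * \<i> * of_real (2 * pi))))"
    by (simp only:) simp
  also have "\<bar>\<dots>\<bar> \<le> C * s^5"
    using abs_Im_le_cmod C assms(2,3) order_trans by blast
  finally show ?thesis .
qed

lemma period_graph_near_2pi:
  fixes zh :: "real \<times> real \<Rightarrow> complex" and T :: "real \<Rightarrow> real" and a C \<epsilon> \<delta> :: real
  assumes C: "\<forall>s\<in>{0..\<epsilon>}. \<forall>t\<in>I.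
        cmod (zh (s, t) - (exp (\<i> * t) - of_real ((4/3) * a * s^4) * exp (3 * \<i> * t)))
          \<le> C * s^5"
    and I_nbhd: "{0..2*pi} \<subseteq> I"
    and real_at_0: "\<forall>s\<in>{0..\<epsilon>}. Im (zh (s, 0)) = 0"
    and T0: "T 0 = 2 * pi"
    and T_pos: "\<forall>s\<in>{0<..\<epsilon>}. T s > 0"
    and T_dom: "\<forall>s\<in>{0<..\<epsilon>}. {0..T s} \<subseteq> I"
    and periodic: "\<forall>s\<in>{0<..\<epsilon>}. \<forall>t. t \<in> I \<and> t + T s \<in> I \<longrightarrow> zh (s, t + T s) = zh (s, t)"
    and simple_closed: "\<forall>s\<in>{0<..\<epsilon>}.
        simple_path (\<lambda>u. zh (s, u * T s)) \<and>
        pathfinish (\<lambda>u. zh (s, u * T s)) = pathstart (\<lambda>u. zh (s, u * T s))"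
    and "0 < \<epsilon>" "0 < \<delta>" "\<delta> \<le> 1/2"
  obtains \<epsilon>0 where "0 < \<epsilon>0" "\<epsilon>0 \<le> \<epsilon>"
    and "\<forall>s\<in>{0..\<epsilon>0}. \<bar>T s - 2*pi\<bar> < \<delta> \<and> Im (zh (s, T s)) = 0"
proof -
  define K where "K = \<bar>C\<bar> + 2 * \<bar>a\<bar>"
  define \<rho> where "\<rho> = min (1/4) (sin (\<delta> / 2) / 2)"
  define \<epsilon>0 where "\<epsilon>0 = min \<epsilon> (min 1 (\<rho> / (K + 1)))"
  have "0 < \<rho>"
    using \<open>0 < \<delta>\<close> \<open>\<delta> \<le> 1/2\<close> pi_gt3 sin_gt_zero[of "\<delta> / 2"] by (simp add: \<rho>_def)
  moreover have "0 \<le> K" by (simp add: K_def)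
  ultimately have "0 < \<epsilon>0" "\<epsilon>0 \<le> \<epsilon>" "\<epsilon>0 \<le> 1"
    using \<open>0 < \<epsilon>\<close> by (auto simp: \<epsilon>0_def)
  have "\<epsilon>0 \<le> \<rho> / (K + 1)" by (simp add: \<epsilon>0_def)
  then have "(K + 1) * \<epsilon>0 \<le> \<rho>" using \<open>0 \<le> K\<close> by (simp add: field_simps)
  then have "K * \<epsilon>0 \<le> \<rho>" using \<open>0 < \<epsilon>0\<close> by (simp add: algebra_simps)
  have "\<bar>T s - 2*pi\<bar> < \<delta> \<and> Im (zh (s, T s)) = 0" if s: "s \<in> {0..\<epsilon>0}" for s
  proof (cases "s = 0")
    case True
    have "2 * pi \<in> I" using I_nbhd by auto
    with True show ?thesis
      using T0 expansion_at_zero[OF C] \<open>0 < \<epsilon>\<close> \<open>0 < \<delta>\<close> exp_two_pi_i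
      by (simp add: mult.commute)
  next
    case False
    with s \<open>\<epsilon>0 \<le> \<epsilon>\<close> have "s \<in> {0<..\<epsilon>}" by auto
    have near: "\<forall>t\<in>I. cmod (zh (s, t) - exp (\<i> * t)) \<le> \<rho>"
    proof
      fix t assume "t \<in> I"
      then have "cmod (zh (s, t) - exp (\<i> * t)) \<le> K * s"
        unfolding K_def using s \<open>\<epsilon>0 \<le> \<epsilon>\<close> \<open>\<epsilon>0 \<le> 1\<close>
        by (intro expansion_near_circle[OF C]) auto
      also have "\<dots> \<le> K * \<epsilon>0" using s \<open>0 \<le> K\<close> by (simp add: mult_left_mono)
      finally show "cmod (zh (s, t) - exp (\<i> * t)) \<le> \<rho>" using \<open>K * \<epsilon>0 \<le> \<rho>\<close> by simp
    qed
    have "\<bar>T s - 2*pi\<bar> < \<delta>"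
      using \<open>s \<in> {0<..\<epsilon>}\<close> T_pos T_dom periodic simple_closed \<open>0 < \<delta>\<close> \<open>\<delta> \<le> 1/2\<close>
      by (intro period_near_2pi[OF I_nbhd _ _ _ _ _ near]) (auto simp: \<rho>_def)
    moreover have "0 < T s" "{0..T s} \<subseteq> I" using \<open>s \<in> {0<..\<epsilon>}\<close> T_pos T_dom by auto
    then have "0 \<in> I" "T s \<in> I" by auto
    then have "zh (s, T s) = zh (s, 0)"
      using periodic[rule_format, OF \<open>s \<in> {0<..\<epsilon>}\<close>, of 0] by simp
    ultimately show ?thesis using real_at_0 \<open>s \<in> {0<..\<epsilon>}\<close> by auto
  qed
  then show ?thesis using that \<open>0 < \<epsilon>0\<close> \<open>\<epsilon>0 \<le> \<epsilon>\<close> by blast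
qed

theorem mainTheorem7:
  fixes zh :: "real \<times> real \<Rightarrow> complex"
    and T :: "real \<Rightarrow> real"
    and a \<epsilon> :: real
    and I :: "real set"
  assumes eps_pos: "\<epsilon> > 0"
    and I_open: "open I"
    and I_nbhd: "{0..2*pi} \<subseteq> I"
    and smooth: "Ck_on 7 ({0..\<epsilon>} \<times> I) zh"
    and expansion: "\<exists>C. \<forall>s\<in>{0..\<epsilon>}. \<forall>t\<in>I.
        cmod (zh (s, t) - (exp (\<i> * t) - (4/3) * a * s^4 * exp (3 * \<i> * t))) \<le> C * s^5"
    and real_at_0: "\<forall>s\<in>{0..\<epsilon>}. Im (zh (s, 0)) = 0"
    and T0: "T 0 = 2 * pi"
    and T_pos: "\<forall>s\<in>{0<..\<epsilon>}. T s > 0"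
    and T_dom: "\<forall>s\<in>{0<..\<epsilon>}. {0..T s} \<subseteq> I"
    and periodic: "\<forall>s\<in>{0<..\<epsilon>}. \<forall>t. t \<in> I \<and> t + T s \<in> I \<longrightarrow> zh (s, t + T s) = zh (s, t)"
    and simple_closed: "\<forall>s\<in>{0<..\<epsilon>}.
        simple_path (\<lambda>u. zh (s, u * T s)) \<and>
        pathfinish (\<lambda>u. zh (s, u * T s)) = pathstart (\<lambda>u. zh (s, u * T s))"
  shows "\<exists>\<epsilon>'. 0 < \<epsilon>' \<and> \<epsilon>' \<le> \<epsilon> \<and> Ck_on 7 {0..\<epsilon>'} T \<and>
           (\<exists>C. \<forall>s\<in>{0..\<epsilon>'}. \<bar>T s - 2 * pi\<bar> \<le> C * s^5)"
proof -
  define S where "S = {0..\<epsilon>} \<times> I"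
  obtain C where C: "\<forall>s\<in>{0..\<epsilon>}. \<forall>t\<in>I.
        cmod (zh (s, t) - (exp (\<i> * t) - of_real ((4/3) * a * s^4) * exp (3 * \<i> * t)))
          \<le> C * s^5"
    using expansion by blast
  have "2 * pi \<in> I" using I_nbhd by auto
  have "Ck_on (Suc 6) S zh" using smooth by (simp add: S_def)
  then obtain Fs Ft where
    F': "\<forall>p\<in>S. ((\<lambda>p. Im (zh p)) has_derivative (\<lambda>h. fst h * Fs p + snd h * Ft p)) (at p within S)"
    and Fs: "Ck_on 6 S Fs" and Ft: "Ck_on 6 S Ft"
    by (rule Ck_on_Suc_Im_pairE)
  have "\<forall>t\<in>I. Im (zh (0, t)) = sin t"
    using expansion_at_zero[OF C] eps_pos by (simp add: Im_exp)
  moreover have "{0} \<times> I \<subseteq> S" using eps_pos by (auto simp: S_def)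
  ultimately have "Ft (0, 2 * pi) = 1"
    using partial_snd_of_sin_slice[OF F'[rule_format, of "(0, 2 * pi)"] _ I_open \<open>2 * pi \<in> I\<close>]
      \<open>2 * pi \<in> I\<close> by auto
  then obtain \<epsilon>1 \<delta> where "0 < \<epsilon>1" "0 < \<delta>" "\<delta> \<le> 1/2"
    and BS: "{0..\<epsilon>1} \<times> {2 * pi - \<delta>..2 * pi + \<delta>} \<subseteq> S"
    and Ft_ge: "\<forall>p\<in>{0..\<epsilon>1} \<times> {2 * pi - \<delta>..2 * pi + \<delta>}. 1/2 \<le> Ft p"
    using continuous_on_pos_box[OF Ck_on_imp_continuous_on[OF Ft[unfolded S_def]] eps_pos I_open
        \<open>2 * pi \<in> I\<close>] by (auto simp: S_def)
  define B where "B = {0..\<epsilon>1} \<times> {2 * pi - \<delta>..2 * pi + \<delta>}"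
  obtain \<epsilon>0 where "0 < \<epsilon>0" "\<epsilon>0 \<le> \<epsilon>"
    and period: "\<forall>s\<in>{0..\<epsilon>0}. \<bar>T s - 2*pi\<bar> < \<delta> \<and> Im (zh (s, T s)) = 0"
    using period_graph_near_2pi[OF C I_nbhd real_at_0 T0 T_pos T_dom periodic simple_closed
        eps_pos \<open>0 < \<delta>\<close> \<open>\<delta> \<le> 1/2\<close>] .
  define \<epsilon>' where "\<epsilon>' = min \<epsilon>0 \<epsilon>1"
  have graph: "\<forall>s\<in>{0..\<epsilon>'}. (s, T s) \<in> B \<and> Im (zh (s, T s)) = 0"
  proof
    fix s assume "s \<in> {0..\<epsilon>'}"
    then show "(s, T s) \<in> B \<and> Im (zh (s, T s)) = 0"
      using period[rule_format, of s] by (auto simp: B_def \<epsilon>'_def abs_less_iff)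
  qed
  have "convex B" "compact B" by (simp_all add: B_def convex_Times compact_Times)
  moreover have F'_B: "\<forall>p\<in>B. ((\<lambda>p. Im (zh p)) has_derivative (\<lambda>h. fst h * Fs p + snd h * Ft p)) (at p within B)"
    using F' BS by (auto simp: B_def intro: has_derivative_subset)
  ultimately have "Ck_on 7 {0..\<epsilon>'} T"
    using implicit_graph_Ck_on[where k=6 and m="1/2"] Ck_on_subset[OF Fs BS] Ck_on_subset[OF Ft BS]
      Ft_ge graph by (simp add: B_def numeral_eq_Suc)
  moreover have "\<bar>T s - 2 * pi\<bar> \<le> (2 * C) * s^5" if "s \<in> {0..\<epsilon>'}" for s
  proof -
    have "(s, 2 * pi) \<in> B" using that \<open>0 < \<delta>\<close> by (simp add: B_def \<epsilon>'_def)
    then have "\<bar>T s - 2 * pi\<bar> * (1/2) \<le> \<bar>Im (zh (s, 2 * pi))\<bar>"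
      using implicit_root_displacement_le[OF \<open>convex B\<close> F'_B, of "1/2"] Ft_ge graph that
      by (simp add: B_def)
    also have "\<dots> \<le> C * s^5"
      using that \<open>\<epsilon>0 \<le> \<epsilon>\<close> \<open>2 * pi \<in> I\<close> by (intro expansion_Im_at_2pi[OF C]) (auto simp: \<epsilon>'_def)
    finally show ?thesis by simp
  qed
  moreover have "0 < \<epsilon>'" "\<epsilon>' \<le> \<epsilon>" using \<open>0 < \<epsilon>0\<close> \<open>0 < \<epsilon>1\<close> \<open>\<epsilon>0 \<le> \<epsilon>\<close> by (auto simp: \<epsilon>'_def)
  ultimately show ?thesis by blast
qed

end
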